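(* Let $g$ be a symplectic potential on $P$ and let $\psi\in C^\infty(P)$ be strongly convex, such that $g_s:=g+s\psi$ is a symplectic potential for every $s>0$. Write $X_\psi=-\sum_{j}\frac{\partial\psi}{\partial x^j}\frac{\partial}{\partial\theta_j}$, and on $\check X_P$ let $z_j=\frac{\partial g}{\partial x^j}+i\theta_j$ and $z_j(s)=\frac{\partial g_s}{\partial x^j}+i\theta_j$. Let $s>0$. Then: (a) For each $j=1,\dots,n$ the series $e^{is\mathcal L_{X_\psi}}X_{z_j}=\sum_{k\ge0}\frac{(is)^k}{k!}\mathcal L_{X_\psi}^kX_{z_j}$ converges on $\check X_P$, and the vector fields so obtained span $\mathcal P_{g_s}$ at every point of $\check X_P$; that is, as distributions, $\mathcal P_{g_s}=e^{is\mathcal L_{X_\psi}}\mathcal P_g$. (b) Let $dZ_s$ denote the $I_{g_s}$-meromorphic section of the canonical bundle $K_{X_P}$ with divisor $-(D_1+\cdots+D_r)$, given on $\check X_P$ by $dZ_s=dz_1(s)\wedge\cdots\wedge dz_n(s)$, and let $dZ=dz_1\wedge\cdots\wedge dz_n$ be the corresponding section for $g$. Then $dZ_s=e^{is\mathcal L_{X_\psi}}dZ$, where the right-hand side is interpreted pointwise as a (convergent) power series in $s$.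
   Context: Let $P=\{x\in\mathbb R^n:\ell_j(x):=\langle\nu_j,x\rangle+\lambda_j\ge0,\ j=1,\dots,r\}$ be a Delzant polytope with primitive inward normals $\nu_j\in\mathbb Z^n$, interior $\check P$, and let $(X_P,\omega)$ be the associated compact symplectic toric $2n$-manifold with moment map $\mu:X_P\to P$; $D_j:=\mu^{-1}(\{\ell_j=0\}\cap P)$ are the toric divisors. On $\check X_P:=\mu^{-1}(\check P)\cong\check P\times\mathbb T^n$ use action-angle coordinates $(x,\theta)$, so $\mu(x,\theta)=x$ and $\omega=\sum_j dx^j\wedge d\theta_j$. For a (possibly complex-valued) function $f$, the Hamiltonian vector field $X_f$ is defined by $\iota_{X_f}\omega=df$ (extended $\mathbb C$-linearly). A symplectic potential is a function $g=g_P+\varphi$ on $\check P$, where $g_P=\frac12\sum_{j=1}^r\ell_j\log\ell_j$ and $\varphi\in C^\infty(P)$, such that the Hessian $H_g$ is positive definite on $\check P$ and $\det H_g=(\alpha\prod_j\ell_j)^{-1}$ for some smooth positive function $\alpha$ on $P$. Such $g$ determines a toric Kähler structure on $X_P$ (compatible with $\omega$) whose complex structure $I_g$ has, on $\check X_P$, holomorphic coordinates $z_j=\partial g/\partial x^j+i\theta_j$; the Kähler polarization $\mathcal P_g=T^{0,1}X_P$ is, on $\check X_P$, spanned by $\partial/\partial\bar z_j$, $j=1,\dots,n$. For a vector field $V$ and a tensor field $T$, $e^{\tau\mathcal L_V}T:=\sum_{k\ge0}\frac{\tau^k}{k!}\mathcal L_V^kT$ whenever this series converges. *)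

theory Defs
  imports "HOL-Analysis.Analysis"
begin

definition ell :: "('r \<Rightarrow> int^'n) \<Rightarrow> ('r \<Rightarrow> real) \<Rightarrow> 'r \<Rightarrow> real^'n::finite \<Rightarrow> real" where
  "ell nu lam j x = (\<Sum>i\<in>UNIV. real_of_int (nu j $ i) * x $ i) + lam j"

definition polytope :: "('r \<Rightarrow> int^'n) \<Rightarrow> ('r \<Rightarrow> real) \<Rightarrow> (real^'n::finite) set" where
  "polytope nu lam = {x. \<forall>j. 0 \<le> ell nu lam j x}"

text \<open>Delzant polytope: compact with nonempty interior, each inequality cuts out a
  facet, the normals are primitive, and at each vertex the normals of the facets
  through it form a Z-basis of Z^n (simple, rational, smooth).\<close>

definition delzant :: "('r \<Rightarrow> int^'n::finite) \<Rightarrow> ('r \<Rightarrow> real) \<Rightarrow> bool" where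
  "delzant nu lam \<longleftrightarrow>
     bounded (polytope nu lam) \<and> interior (polytope nu lam) \<noteq> {} \<and>
     (\<forall>j. aff_dim {x\<in>polytope nu lam. ell nu lam j x = 0} = int CARD('n) - 1) \<and>
     (\<forall>j. \<forall>d::int. (\<forall>i. d dvd nu j $ i) \<longrightarrow> \<bar>d\<bar> = 1) \<and>
     (\<forall>v. v extreme_point_of (polytope nu lam) \<longrightarrow>
        (\<exists>f::'n \<Rightarrow> 'r. bij_betw f UNIV {j. ell nu lam j v = 0} \<and>
                       \<bar>det (\<chi> i. nu (f i))\<bar> = 1))"

fun dder :: "('a::real_normed_vector \<Rightarrow> 'b::real_normed_vector) \<Rightarrow> 'a list \<Rightarrow> 'a \<Rightarrow> 'b" where
  "dder f [] = f"
| "dder f (v # vs) = (\<lambda>x. frechet_derivative (dder f vs) (at x) v)"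

text \<open>C^infinity on an open set: all iterated directional derivatives exist
  (and are differentiable, hence continuous).\<close>
definition smooth_on :: "'a::real_normed_vector set \<Rightarrow> ('a \<Rightarrow> 'b::real_normed_vector) \<Rightarrow> bool" where
  "smooth_on U f \<longleftrightarrow> open U \<and> (\<forall>vs. dder f vs differentiable_on U)"

definition smooth_upto :: "'a::real_normed_vector set \<Rightarrow> ('a \<Rightarrow> 'b::real_normed_vector) \<Rightarrow> bool" where
  "smooth_upto S f \<longleftrightarrow> (\<exists>U h. S \<subseteq> U \<and> smooth_on U h \<and> (\<forall>x\<in>S. h x = f x))"

definition pd :: "(real^'n::finite \<Rightarrow> real) \<Rightarrow> 'n \<Rightarrow> real^'n \<Rightarrow> real" where
  "pd f i x = frechet_derivative f (at x) (axis i 1)"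

definition hess :: "(real^'n::finite \<Rightarrow> real) \<Rightarrow> real^'n \<Rightarrow> real^'n^'n" where
  "hess f x = (\<chi> i j. pd (pd f j) i x)"

definition gP :: "('r::finite \<Rightarrow> int^'n::finite) \<Rightarrow> ('r \<Rightarrow> real) \<Rightarrow> real^'n \<Rightarrow> real" where
  "gP nu lam x = 1/2 * (\<Sum>j\<in>UNIV. ell nu lam j x * ln (ell nu lam j x))"

definition sympl_potential :: "('r::finite \<Rightarrow> int^'n::finite) \<Rightarrow> ('r \<Rightarrow> real) \<Rightarrow> (real^'n \<Rightarrow> real) \<Rightarrow> bool" where
  "sympl_potential nu lam g \<longleftrightarrow>
     (\<exists>\<phi> \<alpha>. smooth_upto (polytope nu lam) \<phi> \<and>
            (\<forall>x\<in>interior (polytope nu lam). g x = gP nu lam x + \<phi> x) \<and>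
            smooth_upto (polytope nu lam) \<alpha> \<and> (\<forall>x\<in>polytope nu lam. 0 < \<alpha> x) \<and>
            (\<forall>x\<in>interior (polytope nu lam).
               (\<forall>v. v \<noteq> 0 \<longrightarrow> 0 < v \<bullet> (hess g x *v v)) \<and>
               det (hess g x) = inverse (\<alpha> x * (\<Prod>j\<in>UNIV. ell nu lam j x))))"

definition strongly_convex_on :: "(real^'n::finite) set \<Rightarrow> (real^'n \<Rightarrow> real) \<Rightarrow> bool" where
  "strongly_convex_on S f \<longleftrightarrow> (\<exists>c>0. convex_on S (\<lambda>x. f x - c / 2 * norm x ^ 2))"

text \<open>Points of the open dense chart are (x, theta) with x in the interior of P;
  theta is taken in the universal cover R^n of the torus.  Complexified tangent
  vectors are pairs (a, b) = sum a_j d/dx^j + b_j d/dtheta_j.\<close>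

type_synonym 'n pt = "(real^'n) \<times> (real^'n)"
type_synonym 'n ctv = "(complex^'n) \<times> (complex^'n)"

definition chart :: "('r \<Rightarrow> int^'n::finite) \<Rightarrow> ('r \<Rightarrow> real) \<Rightarrow> 'n pt set" where
  "chart nu lam = interior (polytope nu lam) \<times> UNIV"

definition cvre :: "complex^'n::finite \<Rightarrow> real^'n" where "cvre a = (\<chi> i. Re (a $ i))"
definition cvim :: "complex^'n::finite \<Rightarrow> real^'n" where "cvim a = (\<chi> i. Im (a $ i))"

definition cre :: "'n::finite ctv \<Rightarrow> 'n pt" where "cre w = (cvre (fst w), cvre (snd w))"
definition cim :: "'n::finite ctv \<Rightarrow> 'n pt" where "cim w = (cvim (fst w), cvim (snd w))"

definition cscale :: "complex \<Rightarrow> 'n::finite ctv \<Rightarrow> 'n ctv" where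
  "cscale c w = (c *s fst w, c *s snd w)"

text \<open>C-linear extension of the differential of a complex function / vector field.\<close>
definition cdiff :: "('n::finite pt \<Rightarrow> complex) \<Rightarrow> 'n pt \<Rightarrow> 'n ctv \<Rightarrow> complex" where
  "cdiff f p w = frechet_derivative f (at p) (cre w) + \<i> * frechet_derivative f (at p) (cim w)"

definition cdiffV :: "('n::finite pt \<Rightarrow> 'n ctv) \<Rightarrow> 'n pt \<Rightarrow> 'n ctv \<Rightarrow> 'n ctv" where
  "cdiffV Y p w = frechet_derivative Y (at p) (cre w) + cscale \<i> (frechet_derivative Y (at p) (cim w))"

text \<open>omega = sum_j dx^j /\ dtheta_j, extended C-bilinearly.\<close>
definition omega :: "'n::finite ctv \<Rightarrow> 'n ctv \<Rightarrow> complex" where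
  "omega V W = (\<Sum>j\<in>UNIV. fst V $ j * snd W $ j - snd V $ j * fst W $ j)"

definition ham_vf :: "('n::finite pt \<Rightarrow> complex) \<Rightarrow> 'n pt \<Rightarrow> 'n ctv" where
  "ham_vf f p = (THE V. \<forall>W. omega V W = cdiff f p W)"

text \<open>Lie derivative of a vector field: L_X Y = [X, Y].\<close>
definition lie :: "('n::finite pt \<Rightarrow> 'n ctv) \<Rightarrow> ('n pt \<Rightarrow> 'n ctv) \<Rightarrow> 'n pt \<Rightarrow> 'n ctv" where
  "lie X Y p = cdiffV Y p (X p) - cdiffV X p (Y p)"

definition lift :: "(real^'n::finite \<Rightarrow> real) \<Rightarrow> 'n pt \<Rightarrow> complex" where
  "lift f p = complex_of_real (f (fst p))"

definition zc :: "(real^'n::finite \<Rightarrow> real) \<Rightarrow> 'n \<Rightarrow> 'n pt \<Rightarrow> complex" where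
  "zc g j p = complex_of_real (pd g j (fst p)) + \<i> * complex_of_real (snd p $ j)"

definition dzbar :: "(real^'n::finite \<Rightarrow> real) \<Rightarrow> 'n \<Rightarrow> 'n pt \<Rightarrow> 'n ctv" where
  "dzbar g j p = (THE w. \<forall>k. cdiff (zc g k) p w = 0 \<and>
                         cdiff (\<lambda>q. cnj (zc g k q)) p w = (if k = j then 1 else 0))"

definition cspan_fam :: "('n::finite \<Rightarrow> 'm::finite ctv) \<Rightarrow> 'm ctv set" where
  "cspan_fam v = {\<Sum>j\<in>UNIV. cscale (c j) (v j) | c. True}"

text \<open>Fibre at p of the Kaehler polarization P_g = T^{0,1}: span of the d/d(zbar_j).\<close>
definition polarization :: "(real^'n::finite \<Rightarrow> real) \<Rightarrow> 'n pt \<Rightarrow> 'n ctv set" where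
  "polarization g p = cspan_fam (\<lambda>j. dzbar g j p)"

text \<open>An n-form is a map p, (v_1..v_n) |-> complex.  dZ = dz_1 /\ ... /\ dz_n.\<close>
definition dZ :: "(real^'n::finite \<Rightarrow> real) \<Rightarrow> 'n pt \<Rightarrow> ('n \<Rightarrow> 'n ctv) \<Rightarrow> complex" where
  "dZ g p v = det (\<chi> k l. cdiff (zc g k) p (v l))"

definition lieF :: "('n::finite pt \<Rightarrow> 'n ctv) \<Rightarrow> ('n pt \<Rightarrow> ('n \<Rightarrow> 'n ctv) \<Rightarrow> complex)
                     \<Rightarrow> 'n pt \<Rightarrow> ('n \<Rightarrow> 'n ctv) \<Rightarrow> complex" where
  "lieF X F p v = cdiff (\<lambda>q. F q v) p (X p) + (\<Sum>l\<in>UNIV. F p (v(l := cdiffV X p (v l))))"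

end

theory Submission
  imports Defs
begin

text \<open>
  On the action-angle chart the Hamiltonian vector field of a function of x alone is vertical,
  X_psi = - sum_i d_i psi d/dtheta_i, while X_zj = i d/dx_j - sum_i d_i d_j g d/dtheta_i.
  Bracketing with X_psi only differentiates coefficients in x-directions, so
  [X_psi, X_zj] = i sum_i d_i d_j psi d/dtheta_i is vertical with coefficients depending on x
  only, and the next bracket vanishes.  The exponential series therefore stops after two terms
  and equals X_zj(s), because the Hessian of g_s is that of g plus s times that of psi.
  The X_zk(s) and the d/dzbar_k(s) both span the common kernel of the forms dz_k(s); this only
  needs the Hessian of g_s to be symmetric and nondegenerate.

  For the canonical forms, the Lie derivative of dZ(v_1, ..., v_n) along X_psi replaces one
  argument v_l by DX_psi v_l, i.e. one column (dz_k(v_l))_k of the determinant by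
  -i (d(d_k psi)(v_l))_k, and a column replaced twice vanishes.  Hence L^m dZ is m! times the
  sum of the determinants with exactly m columns replaced, and the exponential series is the
  finite multilinear expansion of det(dz_k(v_l) + s d(d_k psi)(v_l)) = dZ_s(v).
\<close>

lemma frechet_derivative_cong_open:
  assumes "open S" "x \<in> S" "\<And>y. y \<in> S \<Longrightarrow> f y = g y"
  shows "frechet_derivative f (at x) = frechet_derivative g (at x)"
proof -
  have "(f has_derivative D) (at x) = (g has_derivative D) (at x)" for D
    using has_derivative_transform_within_open[of f D x UNIV S g]
      has_derivative_transform_within_open[of g D x UNIV S f] assms by auto
  then show ?thesis unfolding frechet_derivative_def by simp
qed

lemma differentiable_cong_open:
  assumes "open S" "x \<in> S" "\<And>y. y \<in> S \<Longrightarrow> f y = g y" "f differentiable (at x)"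
  shows "g differentiable (at x)"
  using assms has_derivative_transform_within_open[of f _ x UNIV S g]
  unfolding differentiable_def by auto

lemma frechet_derivative_apply:
  assumes "(f has_derivative D) (at x)"
  shows "frechet_derivative f (at x) u = D u"
  using frechet_derivative_at[OF assms] by simp

lemma has_derivative_fst_comp:
  assumes "(\<phi> has_derivative D) (at (fst p))"
  shows "((\<lambda>q. \<phi> (fst q)) has_derivative (\<lambda>u. D (fst u))) (at p)"
  using has_derivative_compose[OF has_derivative_fst[OF has_derivative_ident] assms] .

lemma has_derivative_vec_lambda:
  fixes f :: "'i::finite \<Rightarrow> 'a::real_normed_vector \<Rightarrow> 'b::euclidean_space"
  assumes "\<And>i. (f i has_derivative f' i) F"
  shows "((\<lambda>x. \<chi> i. f i x) has_derivative (\<lambda>h. \<chi> i. f' i h)) F"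
proof -
  have "linear (\<lambda>y::'b. axis i y)" for i
    by (rule linearI) (auto simp: vec_eq_iff axis_def)
  then have axis: "bounded_linear (\<lambda>y::'b. axis i y)" for i
    by (simp add: linear_conv_bounded_linear)
  have expand: "(\<chi> i. u i) = (\<Sum>i\<in>UNIV. axis i (u i))" for u :: "'i \<Rightarrow> 'b"
    by (simp add: vec_eq_iff axis_def)
  have "((\<lambda>x. \<Sum>i\<in>UNIV. axis i (f i x)) has_derivative (\<lambda>h. \<Sum>i\<in>UNIV. axis i (f' i h))) F"
    by (intro has_derivative_sum bounded_linear.has_derivative[OF axis] assms)
  then show ?thesis by (simp add: expand)
qed

lemma differentiable_of_real_comp:
  assumes "h differentiable (at x)"
  shows "(\<lambda>x. complex_of_real (h x)) differentiable (at x)"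
  using has_derivative_of_real[OF assms[unfolded frechet_derivative_works]] by (rule differentiableI)

lemma differentiable_prod:
  fixes f :: "'i \<Rightarrow> 'a::real_normed_vector \<Rightarrow> 'b::real_normed_field"
  assumes "\<And>i. i \<in> I \<Longrightarrow> f i differentiable (at x)"
  shows "(\<lambda>x. \<Prod>i\<in>I. f i x) differentiable (at x)"
proof -
  have "\<And>i. i \<in> I \<Longrightarrow> (f i has_derivative frechet_derivative (f i) (at x)) (at x)"
    using assms frechet_derivative_works by blast
  from has_derivative_prod[OF this] show ?thesis by (rule differentiableI)
qed

lemma differentiable_det:
  fixes e :: "'n::finite \<Rightarrow> 'n \<Rightarrow> 'a::real_normed_vector \<Rightarrow> complex"
  assumes "\<And>k l. e k l differentiable (at x0)"
  shows "(\<lambda>x. det (\<chi> k l. e k l x)) differentiable (at x0)"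
proof -
  have "(\<lambda>x. \<Sum>p\<in>{p. p permutes (UNIV::'n set)}. of_int (sign p) * (\<Prod>i\<in>UNIV. e i (p i) x))
          differentiable (at x0)"
    by (intro differentiable_sum ballI differentiable_mult differentiable_const differentiable_prod assms)
      (simp add: finite_permutations)
  then show ?thesis by (simp add: det_def)
qed

definition pd2 :: "(real^'n::finite \<Rightarrow> real) \<Rightarrow> real^'n \<Rightarrow> 'n \<Rightarrow> 'n \<Rightarrow> real" where
  "pd2 f x k i = pd (pd f k) i x"

lemma pd_cong_open:
  assumes "open S" "x \<in> S" "\<And>y. y \<in> S \<Longrightarrow> f y = g y"
  shows "pd f i x = pd g i x"
  unfolding pd_def using frechet_derivative_cong_open[OF assms] by simp

lemma pd_add:
  assumes "f differentiable (at x)" "g differentiable (at x)"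
  shows "pd (\<lambda>y. f y + g y) i x = pd f i x + pd g i x"
proof -
  have "((\<lambda>y. f y + g y) has_derivative
          (\<lambda>h. frechet_derivative f (at x) h + frechet_derivative g (at x) h)) (at x)"
    using assms by (intro has_derivative_add) (auto simp: frechet_derivative_works)
  then show ?thesis unfolding pd_def by (simp add: frechet_derivative_apply)
qed

lemma pd_cmult:
  assumes "f differentiable (at x)"
  shows "pd (\<lambda>y. c * f y) i x = c * pd f i x"
proof -
  have "((\<lambda>y. c * f y) has_derivative (\<lambda>h. c * frechet_derivative f (at x) h)) (at x)"
    using assms by (intro has_derivative_mult_right) (auto simp: frechet_derivative_works)
  then show ?thesis unfolding pd_def by (simp add: frechet_derivative_apply)
qed

lemma frechet_derivative_eq_sum_pd:
  fixes f :: "real^'n::finite \<Rightarrow> real"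
  assumes "f differentiable (at x)"
  shows "frechet_derivative f (at x) u = (\<Sum>i\<in>UNIV. u$i * pd f i x)"
proof -
  have "u = (\<Sum>i\<in>UNIV. (u$i) *\<^sub>R axis i 1)"
    using basis_expansion[of u] by (simp add: scalar_mult_eq_scaleR)
  then have "frechet_derivative f (at x) u
               = frechet_derivative f (at x) (\<Sum>i\<in>UNIV. (u$i) *\<^sub>R axis i 1)"
    by simp
  also have "\<dots> = (\<Sum>i\<in>UNIV. u$i * frechet_derivative f (at x) (axis i 1))"
    using linear_frechet_derivative[OF assms] by (simp add: linear_sum linear_scale)
  finally show ?thesis by (simp add: pd_def)
qed

text \<open>Differentiability up to the third order, which is all the argument uses of smoothness.\<close>
definition differentiable3_on :: "(real^'n::finite) set \<Rightarrow> (real^'n \<Rightarrow> real) \<Rightarrow> bool" where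
  "differentiable3_on S f \<longleftrightarrow> open S \<and>
     (\<forall>x\<in>S. f differentiable (at x) \<and> (\<forall>i. pd f i differentiable (at x)) \<and>
            (\<forall>i j. pd (pd f i) j differentiable (at x)))"

lemma differentiable3_on_cong:
  assumes "differentiable3_on S f" "\<And>y. y \<in> S \<Longrightarrow> g y = f y"
  shows "differentiable3_on S g"
proof -
  have S: "open S" using assms(1) by (simp add: differentiable3_on_def)
  have pd_eq: "pd g i y = pd f i y" if "y \<in> S" for i y
    using pd_cong_open[OF S that, of g f] assms(2) by auto
  have pd_pd_eq: "pd (pd g i) j y = pd (pd f i) j y" if "y \<in> S" for i j y
    using pd_cong_open[OF S that, of "pd g i" "pd f i"] pd_eq by auto
  show ?thesis unfolding differentiable3_on_def
  proof (intro conjI S ballI allI)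
    fix x i j assume x: "x \<in> S"
    show "g differentiable (at x)"
      using differentiable_cong_open[OF S x, of f g] assms x by (auto simp: differentiable3_on_def)
    show "pd g i differentiable (at x)"
      using differentiable_cong_open[OF S x, of "pd f i" "pd g i"] assms x pd_eq
      by (auto simp: differentiable3_on_def)
    show "pd (pd g i) j differentiable (at x)"
      using differentiable_cong_open[OF S x, of "pd (pd f i) j" "pd (pd g i) j"] assms x pd_pd_eq
      by (auto simp: differentiable3_on_def)
  qed
qed

lemma differentiable3_on_add:
  assumes "differentiable3_on S f" "differentiable3_on S g"
  shows "differentiable3_on S (\<lambda>y. f y + g y)"
proof -
  have S: "open S" using assms(1) by (simp add: differentiable3_on_def)
  have pd_eq: "pd (\<lambda>y. f y + g y) i y = pd f i y + pd g i y" if "y \<in> S" for i y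
    using assms that by (intro pd_add) (auto simp: differentiable3_on_def)
  have pd_pd_eq: "pd (pd (\<lambda>y. f y + g y) i) j y = pd (pd f i) j y + pd (pd g i) j y"
    if "y \<in> S" for i j y
  proof -
    have "pd (pd (\<lambda>y. f y + g y) i) j y = pd (\<lambda>y. pd f i y + pd g i y) j y"
      using pd_cong_open[OF S that, of "pd (\<lambda>y. f y + g y) i"] pd_eq by auto
    also have "\<dots> = pd (pd f i) j y + pd (pd g i) j y"
      using assms that by (intro pd_add) (auto simp: differentiable3_on_def)
    finally show ?thesis .
  qed
  show ?thesis unfolding differentiable3_on_def
  proof (intro conjI S ballI allI)
    fix x i j assume x: "x \<in> S"
    show "(\<lambda>y. f y + g y) differentiable (at x)"
      using assms x by (auto simp: differentiable3_on_def)
    show "pd (\<lambda>y. f y + g y) i differentiable (at x)"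
      using differentiable_cong_open[OF S x, of "\<lambda>y. pd f i y + pd g i y"] assms x pd_eq
      by (auto simp: differentiable3_on_def)
    show "pd (pd (\<lambda>y. f y + g y) i) j differentiable (at x)"
      using differentiable_cong_open[OF S x, of "\<lambda>y. pd (pd f i) j y + pd (pd g i) j y"]
        assms x pd_pd_eq by (auto simp: differentiable3_on_def)
  qed
qed

lemma differentiable3_on_cmult:
  assumes "differentiable3_on S f"
  shows "differentiable3_on S (\<lambda>y. c * f y)"
proof -
  have S: "open S" using assms(1) by (simp add: differentiable3_on_def)
  have pd_eq: "pd (\<lambda>y. c * f y) i y = c * pd f i y" if "y \<in> S" for i y
    using assms that by (intro pd_cmult) (auto simp: differentiable3_on_def)
  have pd_pd_eq: "pd (pd (\<lambda>y. c * f y) i) j y = c * pd (pd f i) j y" if "y \<in> S" for i j y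
  proof -
    have "pd (pd (\<lambda>y. c * f y) i) j y = pd (\<lambda>y. c * pd f i y) j y"
      using pd_cong_open[OF S that, of "pd (\<lambda>y. c * f y) i"] pd_eq by auto
    also have "\<dots> = c * pd (pd f i) j y"
      using assms that by (intro pd_cmult) (auto simp: differentiable3_on_def)
    finally show ?thesis .
  qed
  show ?thesis unfolding differentiable3_on_def
  proof (intro conjI S ballI allI)
    fix x i j assume x: "x \<in> S"
    show "(\<lambda>y. c * f y) differentiable (at x)"
      using assms x by (auto simp: differentiable3_on_def)
    show "pd (\<lambda>y. c * f y) i differentiable (at x)"
      using differentiable_cong_open[OF S x, of "\<lambda>y. c * pd f i y"] assms x pd_eq
      by (auto simp: differentiable3_on_def)
    show "pd (pd (\<lambda>y. c * f y) i) j differentiable (at x)"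
      using differentiable_cong_open[OF S x, of "\<lambda>y. c * pd (pd f i) j y"] assms x pd_pd_eq
      by (auto simp: differentiable3_on_def)
  qed
qed

lemma smooth_on_imp_differentiable3_on:
  assumes "smooth_on U h"
  shows "differentiable3_on U h"
proof -
  have U: "open U" using assms by (simp add: smooth_on_def)
  have "dder h vs differentiable (at x)" if "x \<in> U" for vs x
    using assms U that by (auto simp: smooth_on_def differentiable_on_eq_differentiable_at)
  moreover have pd_dder: "pd h i = dder h [axis i 1]" for i
    by (rule ext) (simp add: pd_def)
  moreover have "pd (pd h i) j = dder h [axis j 1, axis i 1]" for i j
    by (rule ext) (simp add: pd_def pd_dder)
  ultimately show ?thesis
    unfolding differentiable3_on_def using U by (metis dder.simps(1))
qed

lemma smooth_upto_imp_differentiable3_on_interior: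
  assumes "smooth_upto P f"
  shows "differentiable3_on (interior P) f"
proof -
  obtain U h where U: "P \<subseteq> U" "smooth_on U h" "\<forall>x\<in>P. h x = f x"
    using assms by (auto simp: smooth_upto_def)
  have "differentiable3_on (interior P) h"
    using smooth_on_imp_differentiable3_on[OF U(2)] U(1) interior_subset
    unfolding differentiable3_on_def by blast
  then show ?thesis
    by (rule differentiable3_on_cong) (use U(3) interior_subset in force)
qed

lemma has_real_derivative_along_line:
  fixes g :: "real^'n::finite \<Rightarrow> real"
  assumes "g differentiable (at (y0 + u *\<^sub>R v))"
  shows "((\<lambda>u. g (y0 + u *\<^sub>R v)) has_real_derivative frechet_derivative g (at (y0 + u *\<^sub>R v)) v)
           (at u)"
proof -
  let ?D = "frechet_derivative g (at (y0 + u *\<^sub>R v))"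
  have line: "((\<lambda>u. y0 + u *\<^sub>R v) has_derivative (\<lambda>h. h *\<^sub>R v)) (at u)"
    by (auto intro!: derivative_eq_intros)
  have "((\<lambda>u. g (y0 + u *\<^sub>R v)) has_derivative (\<lambda>h. ?D (h *\<^sub>R v))) (at u)"
    using has_derivative_compose[OF line] assms frechet_derivative_works by blast
  moreover have "(\<lambda>h. ?D (h *\<^sub>R v)) = (\<lambda>h. ?D v * h)"
    using linear_frechet_derivative[OF assms] by (auto simp: linear_scale)
  ultimately show ?thesis by (simp add: has_field_derivative_def)
qed

lemma second_difference_mean_value:
  fixes f :: "real^'n::finite \<Rightarrow> real"
  assumes f: "differentiable3_on S f" and B: "ball x d \<subseteq> S" and t: "0 < t" "2 * t < d"
  shows "\<exists>y\<in>ball x d. f (x + t *\<^sub>R axis i 1 + t *\<^sub>R axis j 1) - f (x + t *\<^sub>R axis i 1)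
           - f (x + t *\<^sub>R axis j 1) + f x = t^2 * pd (pd f i) j y"
proof -
  define ei :: "real^'n" where "ei = axis i 1"
  define ej :: "real^'n" where "ej = axis j 1"
  have near: "x + u *\<^sub>R ei + w *\<^sub>R ej \<in> ball x d"
    if "0 \<le> u" "u \<le> t" "0 \<le> w" "w \<le> t" for u w
  proof -
    have "norm (u *\<^sub>R ei + w *\<^sub>R ej) \<le> norm (u *\<^sub>R ei) + norm (w *\<^sub>R ej)"
      by (rule norm_triangle_ineq)
    also have "\<dots> \<le> 2 * t" using that by (simp add: ei_def ej_def)
    moreover have "dist x (x + (u *\<^sub>R ei + w *\<^sub>R ej)) = norm (u *\<^sub>R ei + w *\<^sub>R ej)"
      by (metis add_diff_cancel_left' dist_commute dist_norm)
    ultimately show ?thesis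
      using t by (simp add: add.assoc)
  qed
  have diff: "f differentiable (at y)" "pd f i differentiable (at y)"
    "pd (pd f i) j differentiable (at y)" if "y \<in> S" for y
    using f that by (auto simp: differentiable3_on_def)
  define \<phi> where "\<phi> u = f ((x + t *\<^sub>R ej) + u *\<^sub>R ei) - f (x + u *\<^sub>R ei)" for u
  define \<phi>' where "\<phi>' u = pd f i ((x + t *\<^sub>R ej) + u *\<^sub>R ei) - pd f i (x + u *\<^sub>R ei)" for u
  have "\<exists>z>0. z < t \<and> \<phi> t - \<phi> 0 = (t - 0) * \<phi>' z"
  proof (rule MVT2)
    fix u assume u: "0 \<le> u" "u \<le> t"
    have "(x + t *\<^sub>R ej) + u *\<^sub>R ei \<in> S" "x + u *\<^sub>R ei \<in> S"
      using near[OF u, of t] near[OF u, of 0] t B by (auto simp: add_ac)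
    then show "(\<phi> has_real_derivative \<phi>' u) (at u)"
      unfolding \<phi>_def \<phi>'_def pd_def ei_def[symmetric]
      by (intro DERIV_diff has_real_derivative_along_line diff)
  qed fact
  then obtain \<xi> where \<xi>: "0 < \<xi>" "\<xi> < t" "\<phi> t - \<phi> 0 = t * \<phi>' \<xi>" by auto
  define \<rho> where "\<rho> w = pd f i ((x + \<xi> *\<^sub>R ei) + w *\<^sub>R ej)" for w
  have "\<exists>z>0. z < t \<and> \<rho> t - \<rho> 0 = (t - 0) * pd (pd f i) j ((x + \<xi> *\<^sub>R ei) + z *\<^sub>R ej)"
  proof (rule MVT2)
    fix w assume w: "0 \<le> w" "w \<le> t"
    have "(x + \<xi> *\<^sub>R ei) + w *\<^sub>R ej \<in> S" using near[of \<xi> w] \<xi> w B by auto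
    then show "(\<rho> has_real_derivative pd (pd f i) j ((x + \<xi> *\<^sub>R ei) + w *\<^sub>R ej)) (at w)"
      unfolding \<rho>_def pd_def[of "pd f i"] ej_def[symmetric]
      by (intro has_real_derivative_along_line diff)
  qed fact
  then obtain \<eta> where \<eta>: "0 < \<eta>" "\<eta> < t"
    "\<rho> t - \<rho> 0 = t * pd (pd f i) j ((x + \<xi> *\<^sub>R ei) + \<eta> *\<^sub>R ej)" by auto
  have "\<phi>' \<xi> = \<rho> t - \<rho> 0" by (simp add: \<phi>'_def \<rho>_def add_ac)
  then have "\<phi> t - \<phi> 0 = t * (t * pd (pd f i) j ((x + \<xi> *\<^sub>R ei) + \<eta> *\<^sub>R ej))"
    using \<xi>(3) \<eta>(3) by simp
  moreover have "\<phi> t - \<phi> 0 = f (x + t *\<^sub>R axis i 1 + t *\<^sub>R axis j 1) - f (x + t *\<^sub>R axis i 1)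
           - f (x + t *\<^sub>R axis j 1) + f x"
    by (simp add: \<phi>_def ei_def ej_def add_ac)
  ultimately show ?thesis
    using near[of \<xi> \<eta>] \<xi> \<eta> by (intro bexI[of _ "(x + \<xi> *\<^sub>R ei) + \<eta> *\<^sub>R ej"])
      (simp_all add: power2_eq_square)
qed

lemma pd2_commute:
  fixes f :: "real^'n::finite \<Rightarrow> real"
  assumes f: "differentiable3_on S f" and x: "x \<in> S"
  shows "pd2 f x i j = pd2 f x j i"
proof (rule ccontr)
  let ?A = "pd (pd f i) j" and ?B = "pd (pd f j) i"
  assume "\<not> ?thesis"
  then have ne: "?A x \<noteq> ?B x" by (simp add: pd2_def)
  define e where "e = \<bar>?A x - ?B x\<bar> / 2"
  have e: "e > 0" using ne by (simp add: e_def)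
  have cont: "isCont ?A x" "isCont ?B x"
    using f x by (auto simp: differentiable3_on_def intro: differentiable_imp_continuous_within)
  obtain d1 where d1: "d1 > 0" "\<forall>y. dist y x < d1 \<longrightarrow> dist (?A y) (?A x) < e"
    using cont(1) e by (auto simp: continuous_at_eps_delta)
  obtain d2 where d2: "d2 > 0" "\<forall>y. dist y x < d2 \<longrightarrow> dist (?B y) (?B x) < e"
    using cont(2) e by (auto simp: continuous_at_eps_delta)
  obtain d3 where d3: "d3 > 0" "ball x d3 \<subseteq> S"
    using f x open_contains_ball unfolding differentiable3_on_def by blast
  define d where "d = min d1 (min d2 d3)"
  have d: "d > 0" "ball x d \<subseteq> S" using d1 d2 d3 by (auto simp: d_def)
  have t: "0 < d / 3" "2 * (d / 3) < d" using d by auto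
  obtain y y' where "y \<in> ball x d" "y' \<in> ball x d" "?A y = ?B y'"
    using second_difference_mean_value[OF f d(2) t, of i j]
      second_difference_mean_value[OF f d(2) t, of j i] t by (auto simp: algebra_simps)
  moreover from this have "dist (?A y) (?A x) < e" "dist (?B y') (?B x) < e"
    using d1 d2 by (auto simp: d_def dist_commute)
  ultimately have "\<bar>?A x - ?B x\<bar> < 2 * e" by (simp add: dist_real_def)
  then show False by (simp add: e_def)
qed

section \<open>The canonical potential\<close>

definition normal_vec :: "('r \<Rightarrow> int^'n::finite) \<Rightarrow> 'r \<Rightarrow> real^'n" where
  "normal_vec nu j = (\<chi> i. real_of_int (nu j $ i))"

lemma ell_eq_inner: "ell nu lam j x = normal_vec nu j \<bullet> x + lam j"
  by (simp add: ell_def normal_vec_def inner_vec_def mult.commute)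

lemma normal_vec_nonzero:
  assumes "delzant nu lam"
  shows "normal_vec nu j \<noteq> 0"
proof
  assume "normal_vec nu j = 0"
  then have "\<forall>i. (2::int) dvd nu j $ i" by (simp add: normal_vec_def vec_eq_iff)
  then show False using assms by (force simp: delzant_def)
qed

lemma ell_pos_interior:
  assumes D: "delzant nu lam" and x: "x \<in> interior (polytope nu lam)"
  shows "ell nu lam j x > 0"
proof (rule ccontr)
  let ?n = "normal_vec nu j"
  assume "\<not> ell nu lam j x > 0"
  moreover have "ell nu lam j x \<ge> 0" using x interior_subset by (auto simp: polytope_def)
  ultimately have zero: "ell nu lam j x = 0" by simp
  obtain e where e: "e > 0" "ball x e \<subseteq> polytope nu lam"
    using x by (meson mem_interior)
  have n: "?n \<bullet> ?n > 0" using normal_vec_nonzero[OF D] by simp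
  define \<delta> where "\<delta> = e / (2 * norm ?n)"
  have \<delta>: "\<delta> > 0" using e n by (simp add: \<delta>_def)
  have "dist x (x - \<delta> *\<^sub>R ?n) = e / 2"
    using \<delta> n e(1) by (simp add: dist_norm \<delta>_def)
  then have "x - \<delta> *\<^sub>R ?n \<in> polytope nu lam" using e by (auto simp: subset_iff)
  then have "ell nu lam j (x - \<delta> *\<^sub>R ?n) \<ge> 0" by (simp add: polytope_def)
  moreover have "ell nu lam j (x - \<delta> *\<^sub>R ?n) = ell nu lam j x - \<delta> * (?n \<bullet> ?n)"
    by (simp add: ell_eq_inner inner_diff_right)
  moreover have "\<delta> * (?n \<bullet> ?n) > 0" using \<delta> n by simp
  ultimately show False using zero by linarith
qed

definition gP_pd :: "('r::finite \<Rightarrow> int^'n::finite) \<Rightarrow> ('r \<Rightarrow> real) \<Rightarrow> 'n \<Rightarrow> real^'n \<Rightarrow> real" where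
  "gP_pd nu lam i x = 1/2 * (\<Sum>j\<in>UNIV. normal_vec nu j $ i * (ln (ell nu lam j x) + 1))"

definition gP_pd2 ::
    "('r::finite \<Rightarrow> int^'n::finite) \<Rightarrow> ('r \<Rightarrow> real) \<Rightarrow> 'n \<Rightarrow> 'n \<Rightarrow> real^'n \<Rightarrow> real" where
  "gP_pd2 nu lam i k x = 1/2 * (\<Sum>j\<in>UNIV. normal_vec nu j $ i * normal_vec nu j $ k / ell nu lam j x)"

lemma has_derivative_ell: "(ell nu lam j has_derivative (\<lambda>h. normal_vec nu j \<bullet> h)) (at x)"
  unfolding ell_eq_inner[abs_def] by (auto intro!: derivative_eq_intros)

lemma has_derivative_ln_ell:
  assumes "ell nu lam j x > 0"
  shows "((\<lambda>x. ln (ell nu lam j x)) has_derivative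
           (\<lambda>h. (normal_vec nu j \<bullet> h) * inverse (ell nu lam j x))) (at x)"
  using has_derivative_ln[OF assms has_derivative_ell] .

lemma has_derivative_gP:
  assumes "\<And>j. ell nu lam j x > 0"
  shows "(gP nu lam has_derivative
           (\<lambda>h. 1/2 * (\<Sum>j\<in>UNIV. (normal_vec nu j \<bullet> h) * (ln (ell nu lam j x) + 1)))) (at x)"
proof -
  have "((\<lambda>x. ell nu lam j x * ln (ell nu lam j x)) has_derivative
          (\<lambda>h. (normal_vec nu j \<bullet> h) * (ln (ell nu lam j x) + 1))) (at x)" for j
  proof (rule has_derivative_eq_rhs)
    show "((\<lambda>x. ell nu lam j x * ln (ell nu lam j x)) has_derivative
      (\<lambda>h. ell nu lam j x * ((normal_vec nu j \<bullet> h) * inverse (ell nu lam j x))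
           + (normal_vec nu j \<bullet> h) * ln (ell nu lam j x))) (at x)"
      by (rule has_derivative_mult[OF has_derivative_ell has_derivative_ln_ell[OF assms]])
    show "(\<lambda>h. ell nu lam j x * ((normal_vec nu j \<bullet> h) * inverse (ell nu lam j x))
           + (normal_vec nu j \<bullet> h) * ln (ell nu lam j x))
      = (\<lambda>h. (normal_vec nu j \<bullet> h) * (ln (ell nu lam j x) + 1))"
      using assms[of j] by (simp add: field_simps)
  qed
  then show ?thesis
    unfolding gP_def[abs_def] by (intro has_derivative_mult_right has_derivative_sum)
qed

lemma has_derivative_gP_pd:
  assumes "\<And>j. ell nu lam j x > 0"
  shows "(gP_pd nu lam i has_derivative
           (\<lambda>h. 1/2 * (\<Sum>j\<in>UNIV. normal_vec nu j $ i * ((normal_vec nu j \<bullet> h) / ell nu lam j x))))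
         (at x)"
proof -
  have "((\<lambda>x. normal_vec nu j $ i * (ln (ell nu lam j x) + 1)) has_derivative
      (\<lambda>h. normal_vec nu j $ i * ((normal_vec nu j \<bullet> h) * inverse (ell nu lam j x) + 0))) (at x)" for j
    by (rule has_derivative_mult_right[OF has_derivative_add[OF has_derivative_ln_ell[OF assms]
          has_derivative_const]])
  then have "((\<lambda>x. 1/2 * (\<Sum>j\<in>UNIV. normal_vec nu j $ i * (ln (ell nu lam j x) + 1))) has_derivative
      (\<lambda>h. 1/2 * (\<Sum>j\<in>UNIV. normal_vec nu j $ i * ((normal_vec nu j \<bullet> h) * inverse (ell nu lam j x) + 0))))
      (at x)"
    by (rule has_derivative_mult_right[OF has_derivative_sum])
  then show ?thesis by (simp only: gP_pd_def[abs_def] divide_inverse add_0_right)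
qed

lemma differentiable_gP_pd2:
  assumes "\<And>j. ell nu lam j x > 0"
  shows "gP_pd2 nu lam i k differentiable (at x)"
proof -
  have "ell nu lam j differentiable (at x)" for j
    using has_derivative_ell by (rule differentiableI)
  then show ?thesis
    unfolding gP_pd2_def using assms
    by (intro differentiable_mult differentiable_sum differentiable_divide differentiable_const)
      (auto simp: less_imp_neq[symmetric])
qed

lemma differentiable3_on_gP:
  assumes D: "delzant nu lam"
  shows "differentiable3_on (interior (polytope nu lam)) (gP nu lam)"
proof -
  let ?S = "interior (polytope nu lam)"
  have S: "open ?S" by simp
  have pos: "\<And>j. ell nu lam j x > 0" if "x \<in> ?S" for x using ell_pos_interior[OF D that] .
  have pd_eq: "pd (gP nu lam) i x = gP_pd nu lam i x" if "x \<in> ?S" for i x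
    using frechet_derivative_apply[OF has_derivative_gP[OF pos[OF that]]]
    by (simp add: pd_def gP_pd_def inner_axis)
  have pd_pd_eq: "pd (pd (gP nu lam) i) k x = gP_pd2 nu lam i k x" if "x \<in> ?S" for i k x
  proof -
    have "pd (pd (gP nu lam) i) k x = pd (gP_pd nu lam i) k x"
      using pd_cong_open[OF S that, of "pd (gP nu lam) i" "gP_pd nu lam i"] pd_eq by auto
    also have "\<dots> = gP_pd2 nu lam i k x"
      using frechet_derivative_apply[OF has_derivative_gP_pd[OF pos[OF that]]]
      by (simp add: pd_def gP_pd2_def inner_axis)
    finally show ?thesis .
  qed
  show ?thesis unfolding differentiable3_on_def
  proof (intro conjI S ballI allI)
    fix x i j assume x: "x \<in> ?S"
    show "gP nu lam differentiable (at x)"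
      using has_derivative_gP[OF pos[OF x]] by (rule differentiableI)
    show "pd (gP nu lam) i differentiable (at x)"
      using differentiable_cong_open[OF S x, of "gP_pd nu lam i" "pd (gP nu lam) i"] pd_eq x
        differentiableI[OF has_derivative_gP_pd[OF pos[OF x]]] by auto
    show "pd (pd (gP nu lam) i) j differentiable (at x)"
      using differentiable_cong_open[OF S x, of "gP_pd2 nu lam i j" "pd (pd (gP nu lam) i) j"]
        pd_pd_eq x differentiable_gP_pd2[OF pos[OF x]] by auto
  qed
qed

lemma differentiable3_on_sympl_potential:
  assumes "delzant nu lam" "sympl_potential nu lam g"
  shows "differentiable3_on (interior (polytope nu lam)) g"
proof -
  obtain \<phi> where \<phi>: "smooth_upto (polytope nu lam) \<phi>"
    "\<forall>x\<in>interior (polytope nu lam). g x = gP nu lam x + \<phi> x"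
    using assms(2) unfolding sympl_potential_def by blast
  show ?thesis
    by (rule differentiable3_on_cong[OF differentiable3_on_add[OF differentiable3_on_gP[OF assms(1)]
          smooth_upto_imp_differentiable3_on_interior[OF \<phi>(1)]]]) (use \<phi>(2) in auto)
qed

section \<open>Complexified calculus on the chart\<close>

lemma cdiff_eq:
  assumes "(f has_derivative D) (at p)"
  shows "cdiff f p w = D (cre w) + \<i> * D (cim w)"
  using frechet_derivative_apply[OF assms] by (simp add: cdiff_def)

lemma cdiffV_eq:
  assumes "(f has_derivative D) (at p)"
  shows "cdiffV f p w = D (cre w) + cscale \<i> (D (cim w))"
  using frechet_derivative_apply[OF assms] by (simp add: cdiffV_def)

lemma cdiff_fst_comp:
  fixes h :: "real^'n::finite \<Rightarrow> real"
  assumes "h differentiable (at (fst p))"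
  shows "cdiff (\<lambda>q. complex_of_real (h (fst q))) p w
           = (\<Sum>i\<in>UNIV. fst w $ i * complex_of_real (pd h i (fst p)))"
proof -
  let ?D = "frechet_derivative h (at (fst p))"
  have "((\<lambda>q. complex_of_real (h (fst q))) has_derivative (\<lambda>u. complex_of_real (?D (fst u)))) (at p)"
    using has_derivative_fst_comp[OF assms[unfolded frechet_derivative_works]]
    by (rule has_derivative_of_real)
  then show ?thesis
    using frechet_derivative_eq_sum_pd[OF assms]
    by (simp add: cdiff_eq cre_def cim_def cvre_def cvim_def complex_eq_iff Re_sum Im_sum)
qed

lemma cdiff_fst_comp_vertical:
  assumes "h differentiable (at (fst p))" "fst w = 0"
  shows "cdiff (\<lambda>q. h (fst q)) p w = 0"
proof -
  let ?D = "frechet_derivative h (at (fst p))"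
  have "linear ?D" by (rule linear_frechet_derivative[OF assms(1)])
  moreover have "fst (cre w) = 0" "fst (cim w) = 0"
    using assms(2) by (simp_all add: cre_def cim_def cvre_def cvim_def vec_eq_iff)
  ultimately show ?thesis
    using cdiff_eq[OF has_derivative_fst_comp[OF assms(1)[unfolded frechet_derivative_works]]]
    by (simp add: linear_0)
qed

lemma has_derivative_snd_nth:
  "((\<lambda>q::'n::finite pt. complex_of_real (snd q $ j)) has_derivative
     (\<lambda>u. complex_of_real (snd u $ j))) (at p)"
  by (rule has_derivative_of_real[OF bounded_linear.has_derivative[OF bounded_linear_vec_nth
        has_derivative_snd[OF has_derivative_ident]]])

lemma cdiff_zc:
  fixes g :: "real^'n::finite \<Rightarrow> real"
  assumes "pd g j differentiable (at (fst p))"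
  shows "cdiff (zc g j) p w
           = (\<Sum>i\<in>UNIV. fst w $ i * complex_of_real (pd2 g (fst p) j i)) + \<i> * snd w $ j"
proof -
  let ?D = "frechet_derivative (pd g j) (at (fst p))"
  have "((\<lambda>q. complex_of_real (pd g j (fst q))) has_derivative
          (\<lambda>u. complex_of_real (?D (fst u)))) (at p)"
    using has_derivative_fst_comp[OF assms[unfolded frechet_derivative_works]]
    by (rule has_derivative_of_real)
  then have "(zc g j has_derivative
               (\<lambda>u. complex_of_real (?D (fst u)) + \<i> * complex_of_real (snd u $ j))) (at p)"
    unfolding zc_def[abs_def] by (intro has_derivative_add has_derivative_mult_right has_derivative_snd_nth)
  then show ?thesis
    using frechet_derivative_eq_sum_pd[OF assms]
    by (simp add: cdiff_eq pd2_def cre_def cim_def cvre_def cvim_def complex_eq_iff Re_sum Im_sum)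
qed

lemma cdiff_cnj_zc:
  fixes g :: "real^'n::finite \<Rightarrow> real"
  assumes "pd g j differentiable (at (fst p))"
  shows "cdiff (\<lambda>q. cnj (zc g j q)) p w
           = (\<Sum>i\<in>UNIV. fst w $ i * complex_of_real (pd2 g (fst p) j i)) - \<i> * snd w $ j"
proof -
  let ?D = "frechet_derivative (pd g j) (at (fst p))"
  have "((\<lambda>q. complex_of_real (pd g j (fst q))) has_derivative
          (\<lambda>u. complex_of_real (?D (fst u)))) (at p)"
    using has_derivative_fst_comp[OF assms[unfolded frechet_derivative_works]]
    by (rule has_derivative_of_real)
  then have "((\<lambda>q. complex_of_real (pd g j (fst q)) - \<i> * complex_of_real (snd q $ j)) has_derivative
               (\<lambda>u. complex_of_real (?D (fst u)) - \<i> * complex_of_real (snd u $ j))) (at p)"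
    by (intro has_derivative_diff has_derivative_mult_right has_derivative_snd_nth)
  moreover have "(\<lambda>q. cnj (zc g j q))
                   = (\<lambda>q. complex_of_real (pd g j (fst q)) - \<i> * complex_of_real (snd q $ j))"
    by (rule ext) (simp add: zc_def)
  ultimately show ?thesis
    using frechet_derivative_eq_sum_pd[OF assms]
    by (simp add: cdiff_eq pd2_def cre_def cim_def cvre_def cvim_def complex_eq_iff Re_sum Im_sum)
qed

lemma ham_vf_eqI:
  assumes "\<And>W. cdiff f p W = (\<Sum>i\<in>UNIV. fst W $ i * A i + snd W $ i * B i)"
  shows "ham_vf f p = ((\<chi> i. B i), (\<chi> i. - A i))"
  unfolding ham_vf_def
proof (rule the_equality)
  show "\<forall>W. omega ((\<chi> i. B i), (\<chi> i. - A i)) W = cdiff f p W"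
    by (auto simp: omega_def assms algebra_simps intro!: sum.cong)
next
  fix V assume V: "\<forall>W. omega V W = cdiff f p W"
  have "omega V (axis i 1, 0) = cdiff f p (axis i 1, 0)"
    "omega V (0, axis i 1) = cdiff f p (0, axis i 1)" for i
    using V by simp_all
  then have "- snd V $ i = A i" "fst V $ i = B i" for i
    by (simp_all add: omega_def assms axis_def if_distrib[of "\<lambda>x. _ * x"] if_distrib[of "\<lambda>x. x * _"]
        sum_negf sum.delta cong: if_cong)
  then show "V = ((\<chi> i. B i), (\<chi> i. - A i))" by (simp add: prod_eq_iff vec_eq_iff minus_equation_iff)
qed

lemma cdiffV_vertical:
  fixes h :: "'n::finite \<Rightarrow> real^'n \<Rightarrow> real" and F :: "'n pt \<Rightarrow> 'n ctv"
  assumes U: "open U" "fst p \<in> U"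
    and F: "\<And>q. fst q \<in> U \<Longrightarrow> F q = (c, \<chi> i. \<beta> * complex_of_real (h i (fst q)))"
    and h: "\<And>i. h i differentiable (at (fst p))"
  shows "cdiffV F p w = (0, \<chi> i. \<beta> * (\<Sum>k\<in>UNIV. fst w $ k * complex_of_real (pd (h i) k (fst p))))"
proof -
  define G :: "'n pt \<Rightarrow> 'n ctv" where "G q = (c, \<chi> i. \<beta> * complex_of_real (h i (fst q)))" for q
  let ?D = "\<lambda>i. frechet_derivative (h i) (at (fst p))"
  have "((\<lambda>q. \<beta> * complex_of_real (h i (fst q))) has_derivative
          (\<lambda>u. \<beta> * complex_of_real (?D i (fst u)))) (at p)" for i
    by (rule has_derivative_mult_right[OF has_derivative_of_real[OF has_derivative_fst_comp]])
      (use h frechet_derivative_works in blast)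
  then have G': "(G has_derivative (\<lambda>u. (0, \<chi> i. \<beta> * complex_of_real (?D i (fst u))))) (at p)"
    unfolding G_def by (intro has_derivative_Pair has_derivative_const has_derivative_vec_lambda)
  have "frechet_derivative F (at p) = frechet_derivative G (at p)"
    by (rule frechet_derivative_cong_open[of "U \<times> UNIV"]) (use U in \<open>auto simp: open_Times F G_def mem_Times_iff\<close>)
  then have "cdiffV F p w = cdiffV G p w" by (simp add: cdiffV_def)
  also have "\<dots> = (0, \<chi> i. \<beta> * (\<Sum>k\<in>UNIV. fst w $ k * complex_of_real (pd (h i) k (fst p))))"
    using frechet_derivative_eq_sum_pd[OF h]
    by (simp add: cdiffV_eq[OF G'] cscale_def cre_def cim_def cvre_def cvim_def vec_eq_iff
        complex_eq_iff Re_sum Im_sum)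
  finally show ?thesis .
qed

section \<open>Linear algebra of a Kaehler structure at a point\<close>

text \<open>With M the Hessian of the potential, dz_lin M w k and dzbar_lin M w k are dz_k(w) and
  dzbar_k(w) (see cdiff_zc and cdiff_cnj_zc), and tangent01 M is the fibre of T^{0,1}.\<close>
definition dz_lin :: "('n::finite \<Rightarrow> 'n \<Rightarrow> real) \<Rightarrow> 'n ctv \<Rightarrow> 'n \<Rightarrow> complex" where
  "dz_lin M w k = (\<Sum>i\<in>UNIV. fst w $ i * complex_of_real (M k i)) + \<i> * snd w $ k"

definition dzbar_lin :: "('n::finite \<Rightarrow> 'n \<Rightarrow> real) \<Rightarrow> 'n ctv \<Rightarrow> 'n \<Rightarrow> complex" where
  "dzbar_lin M w k = (\<Sum>i\<in>UNIV. fst w $ i * complex_of_real (M k i)) - \<i> * snd w $ k"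

definition tangent01 :: "('n::finite \<Rightarrow> 'n \<Rightarrow> real) \<Rightarrow> 'n ctv set" where
  "tangent01 M = {w. \<forall>k. dz_lin M w k = 0}"

lemma fst_cscale [simp]: "fst (cscale c w) = c *s fst w"
  and snd_cscale [simp]: "snd (cscale c w) = c *s snd w"
  by (simp_all add: cscale_def)

lemma sum_cscale_fst_weighted:
  fixes c :: "'j::finite \<Rightarrow> complex" and v :: "'j \<Rightarrow> 'n::finite ctv"
  shows "(\<Sum>i\<in>UNIV. fst (\<Sum>j\<in>UNIV. cscale (c j) (v j)) $ i * a i)
           = (\<Sum>j\<in>UNIV. c j * (\<Sum>i\<in>UNIV. fst (v j) $ i * a i))"
proof -
  have "(\<Sum>i\<in>UNIV. fst (\<Sum>j\<in>UNIV. cscale (c j) (v j)) $ i * a i)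
          = (\<Sum>i\<in>UNIV. \<Sum>j\<in>UNIV. c j * fst (v j) $ i * a i)"
    by (simp add: fst_sum sum_distrib_right)
  also have "\<dots> = (\<Sum>j\<in>UNIV. c j * (\<Sum>i\<in>UNIV. fst (v j) $ i * a i))"
    by (subst sum.swap) (simp add: sum_distrib_left mult.assoc)
  finally show ?thesis .
qed

lemma dz_lin_sum_cscale:
  fixes c :: "'j::finite \<Rightarrow> complex"
  shows "dz_lin M (\<Sum>j\<in>UNIV. cscale (c j) (v j)) k = (\<Sum>j\<in>UNIV. c j * dz_lin M (v j) k)"
  unfolding dz_lin_def sum_cscale_fst_weighted
  by (simp add: snd_sum sum_distrib_left sum.distrib distrib_left mult.left_commute)

lemma dzbar_lin_sum_cscale:
  fixes c :: "'j::finite \<Rightarrow> complex"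
  shows "dzbar_lin M (\<Sum>j\<in>UNIV. cscale (c j) (v j)) k = (\<Sum>j\<in>UNIV. c j * dzbar_lin M (v j) k)"
  unfolding dzbar_lin_def sum_cscale_fst_weighted
  by (simp add: snd_sum sum_distrib_left sum_subtractf right_diff_distrib mult.left_commute)

lemma dz_lin_diff: "dz_lin M (w1 - w2) k = dz_lin M w1 k - dz_lin M w2 k"
  by (simp add: dz_lin_def algebra_simps sum_subtractf)

lemma dzbar_lin_diff: "dzbar_lin M (w1 - w2) k = dzbar_lin M w1 k - dzbar_lin M w2 k"
  by (simp add: dzbar_lin_def algebra_simps sum_subtractf)

locale nondegenerate_symmetric =
  fixes M :: "'n::finite \<Rightarrow> 'n \<Rightarrow> real"
  assumes symmetric: "\<And>k i. M k i = M i k"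
    and nondegenerate: "\<And>a::real^'n. (\<And>k. (\<Sum>i\<in>UNIV. M k i * a $ i) = 0) \<Longrightarrow> a = 0"
begin

lemma surjective: "\<exists>a. \<forall>k. (\<Sum>i\<in>UNIV. M k i * a $ i) = e $ k"
proof -
  let ?A = "\<chi> k i. M k i :: real^'n^'n"
  have "inj ((*v) ?A)"
  proof (rule injI)
    fix a b assume "?A *v a = ?A *v b"
    then have "?A *v (a - b) = 0" by (simp add: matrix_vector_mult_diff_distrib)
    then have "(\<Sum>i\<in>UNIV. M k i * (a - b) $ i) = 0" for k
      by (simp add: matrix_vector_mult_def vec_eq_iff)
    then have "a - b = 0" by (rule nondegenerate)
    then show "a = b" by simp
  qed
  then have "surj ((*v) ?A)" by (rule linear_inj_imp_surj[OF matrix_vector_mul_linear])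
  then obtain a where "e = ?A *v a" by (metis surj_def)
  then show ?thesis by (auto simp: matrix_vector_mult_def)
qed

lemma eq_zero_if_dz_dzbar_zero:
  assumes "\<And>k. dz_lin M w k = 0" "\<And>k. dzbar_lin M w k = 0"
  shows "w = 0"
proof -
  let ?A = "\<lambda>k. (\<Sum>i\<in>UNIV. fst w $ i * complex_of_real (M k i))"
  have sum_zero: "?A k + \<i> * snd w $ k = 0" and diff_zero: "?A k - \<i> * snd w $ k = 0" for k
    using assms(1)[of k] assms(2)[of k] by (simp_all add: dz_lin_def dzbar_lin_def)
  have "2 * \<i> * snd w $ k = (?A k + \<i> * snd w $ k) - (?A k - \<i> * snd w $ k)" for k
    by (simp add: algebra_simps)
  then have snd_zero: "snd w $ k = 0" for k
    using sum_zero diff_zero by simp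
  then have "?A k = 0" for k using sum_zero[of k] by simp
  then have re: "Re (?A k) = 0" and im: "Im (?A k) = 0" for k by simp_all
  have "cvre (fst w) = 0" "cvim (fst w) = 0"
    by (rule nondegenerate, use re im in \<open>simp add: cvre_def cvim_def Re_sum Im_sum mult.commute\<close>)+
  then show ?thesis
    using snd_zero by (simp add: prod_eq_iff vec_eq_iff cvre_def cvim_def complex_eq_iff)
qed

lemma ex1_dual_basis:
  "\<exists>!w. \<forall>k. dz_lin M w k = 0 \<and> dzbar_lin M w k = (if k = j then 1 else 0)"
proof -
  obtain a :: "real^'n" where a: "\<forall>k. (\<Sum>i\<in>UNIV. M k i * a $ i) = ((1/2) *\<^sub>R axis j 1 :: real^'n) $ k"
    using surjective by blast
  define w0 :: "'n ctv" where "w0 = ((\<chi> i. complex_of_real (a $ i)), (\<chi> i. if i = j then \<i> / 2 else 0))"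
  have "(\<Sum>i\<in>UNIV. fst w0 $ i * complex_of_real (M k i)) = (if k = j then 1/2 else 0)" for k
  proof -
    have "(\<Sum>i\<in>UNIV. M k i * a $ i) = (if k = j then 1/2 else 0)"
      using a[rule_format, of k] by (cases "k = j") (simp_all add: axis_def)
    then have "complex_of_real (\<Sum>i\<in>UNIV. M k i * a $ i) = (if k = j then 1/2 else 0)"
      by simp
    moreover have "(\<Sum>i\<in>UNIV. fst w0 $ i * complex_of_real (M k i))
                     = complex_of_real (\<Sum>i\<in>UNIV. M k i * a $ i)"
      by (simp add: w0_def mult.commute)
    ultimately show ?thesis by simp
  qed
  then have w0: "\<forall>k. dz_lin M w0 k = 0 \<and> dzbar_lin M w0 k = (if k = j then 1 else 0)"
    by (simp add: dz_lin_def dzbar_lin_def) (simp add: w0_def)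
  show ?thesis
  proof (rule ex1I[of _ w0])
    fix w assume w: "\<forall>k. dz_lin M w k = 0 \<and> dzbar_lin M w k = (if k = j then 1 else 0)"
    have "w - w0 = 0"
      by (rule eq_zero_if_dz_dzbar_zero) (use w w0 in \<open>simp_all add: dz_lin_diff dzbar_lin_diff\<close>)
    then show "w = w0" by simp
  qed (rule w0)
qed

lemma cspan_dual_basis:
  assumes W: "\<And>j k. dz_lin M (W j) k = 0 \<and> dzbar_lin M (W j) k = (if k = j then 1 else 0)"
  shows "cspan_fam W = tangent01 M"
proof
  show "cspan_fam W \<subseteq> tangent01 M"
    using W by (auto simp: cspan_fam_def tangent01_def dz_lin_sum_cscale)
next
  show "tangent01 M \<subseteq> cspan_fam W"
  proof
    fix x assume x: "x \<in> tangent01 M"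
    define x' where "x' = (\<Sum>j\<in>UNIV. cscale (dzbar_lin M x j) (W j))"
    have dzbar_x': "dzbar_lin M x' k = dzbar_lin M x k" for k
      using W by (simp add: x'_def dzbar_lin_sum_cscale if_distrib[of "\<lambda>z. _ * z"] cong: if_cong)
    have "x - x' = 0"
      by (rule eq_zero_if_dz_dzbar_zero) (use x W dzbar_x' in
          \<open>simp_all add: dz_lin_diff dzbar_lin_diff x'_def dz_lin_sum_cscale tangent01_def\<close>)
    then show "x \<in> cspan_fam W" unfolding cspan_fam_def x'_def by auto
  qed
qed

text \<open>The family spanned is that of the Hamiltonian vector fields of the z_k (see ham_vf_zc).\<close>
lemma cspan_ham_vf_zc:
  "cspan_fam (\<lambda>j. ((\<chi> i. if i = j then \<i> else 0), \<chi> i. - complex_of_real (M j i))) = tangent01 M"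
  (is "cspan_fam ?X = _")
proof
  have "dz_lin M (?X j) k = \<i> * complex_of_real (M k j) - \<i> * complex_of_real (M j k)" for j k
    by (simp add: dz_lin_def if_distrib[of "\<lambda>z. z * _"] cong: if_cong)
  then show "cspan_fam ?X \<subseteq> tangent01 M"
    by (auto simp: cspan_fam_def tangent01_def dz_lin_sum_cscale symmetric)
next
  show "tangent01 M \<subseteq> cspan_fam ?X"
  proof
    fix x assume "x \<in> tangent01 M"
    then have "\<i> * ((\<Sum>j\<in>UNIV. fst x $ j * complex_of_real (M i j)) + \<i> * snd x $ i) = 0" for i
      by (simp add: tangent01_def dz_lin_def)
    then have snd_x: "snd x $ i = \<i> * (\<Sum>j\<in>UNIV. fst x $ j * complex_of_real (M i j))" for i
      by (simp add: algebra_simps)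
    define c where "c j = - \<i> * fst x $ j" for j
    have "x = (\<Sum>j\<in>UNIV. cscale (c j) (?X j))"
    proof (rule prod_eqI)
      show "fst x = fst (\<Sum>j\<in>UNIV. cscale (c j) (?X j))"
        by (simp add: vec_eq_iff fst_sum c_def if_distrib[of "\<lambda>z. _ * z"] sum_negf sum.delta
            sum.delta' cong: if_cong) (simp add: mult.commute mult.left_commute)
      show "snd x = snd (\<Sum>j\<in>UNIV. cscale (c j) (?X j))"
        by (simp add: vec_eq_iff snd_sum snd_x c_def sum_distrib_left symmetric algebra_simps)
    qed
    then show "x \<in> cspan_fam ?X" unfolding cspan_fam_def by blast
  qed
qed

end

section \<open>Determinant expansions\<close>

lemma det_add_columns:
  fixes a b :: "'n::finite \<Rightarrow> 'n \<Rightarrow> 'a::comm_ring_1"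
  shows "det (\<chi> k l. a k l + b k l) = (\<Sum>S\<in>UNIV. det (\<chi> k l. if l \<in> S then b k l else a k l))"
proof -
  have det_cols: "det (\<chi> k l. f k l)
      = (\<Sum>p\<in>{p. p permutes (UNIV::'n set)}. of_int (sign p) * (\<Prod>i\<in>UNIV. f (p i) i))"
    for f :: "'n \<Rightarrow> 'n \<Rightarrow> 'a"
    by (subst det_transpose[symmetric]) (simp add: det_def transpose_def)
  have "(\<Prod>i\<in>UNIV. a (p i) i + b (p i) i)
          = (\<Sum>S\<in>Pow UNIV. (\<Prod>i\<in>S. b (p i) i) * (\<Prod>i\<in>UNIV - S. a (p i) i))" for p :: "'n \<Rightarrow> 'n"
    using prod_add[of "UNIV::'n set" "\<lambda>i. b (p i) i" "\<lambda>i. a (p i) i"] by (simp add: add.commute)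
  then have "det (\<chi> k l. a k l + b k l) = (\<Sum>p\<in>{p. p permutes (UNIV::'n set)}. of_int (sign p) *
          (\<Sum>S\<in>Pow UNIV. (\<Prod>i\<in>S. b (p i) i) * (\<Prod>i\<in>UNIV - S. a (p i) i)))"
    unfolding det_cols by simp
  also have "\<dots> = (\<Sum>S\<in>UNIV. \<Sum>p\<in>{p. p permutes (UNIV::'n set)}. of_int (sign p) *
          ((\<Prod>i\<in>S. b (p i) i) * (\<Prod>i\<in>UNIV - S. a (p i) i)))"
    by (simp add: sum_distrib_left sum.swap[of _ "{p. p permutes (UNIV::'n set)}"])
  also have "\<dots> = (\<Sum>S\<in>UNIV. det (\<chi> k l. if l \<in> S then b k l else a k l))"
  proof (rule sum.cong[OF refl])
    fix S :: "'n set"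
    have "(\<Prod>i\<in>UNIV. if i \<in> S then b (p i) i else a (p i) i)
            = (\<Prod>i\<in>S. b (p i) i) * (\<Prod>i\<in>UNIV - S. a (p i) i)" for p
      by (simp add: prod.If_cases Compl_eq_Diff_UNIV Int_absorb1)
    then show "(\<Sum>p\<in>{p. p permutes (UNIV::'n set)}. of_int (sign p) *
                ((\<Prod>i\<in>S. b (p i) i) * (\<Prod>i\<in>UNIV - S. a (p i) i)))
        = det (\<chi> k l. if l \<in> S then b k l else a k l)"
      unfolding det_cols by simp
  qed
  finally show ?thesis .
qed

lemma det_scale_columns:
  fixes A :: "'n::finite \<Rightarrow> 'n \<Rightarrow> 'a::comm_ring_1"
  shows "det (\<chi> k l. if l \<in> S then c * A k l else A k l) = c ^ card S * det (\<chi> k l. A k l)"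
proof -
  define D :: "'a^'n^'n" where "D = (\<chi> i j. if i = j then (if i \<in> S then c else 1) else 0)"
  have "(\<chi> k l. if l \<in> S then c * A k l else A k l) = (\<chi> k l. A k l) ** D"
    by (simp add: vec_eq_iff matrix_matrix_mult_def D_def if_distrib[of "\<lambda>z. _ * z"] mult.commute
        cong: if_cong)
  moreover have "det D = (\<Prod>i\<in>UNIV. if i \<in> S then c else 1)"
    by (subst det_diagonal) (simp_all add: D_def)
  then have "det D = c ^ card S" by (simp add: prod.If_cases Int_absorb1)
  ultimately show ?thesis by (simp add: det_mul mult.commute)
qed

text \<open>Double counting: each (m+1)-element set T arises from exactly m+1 pairs (l, T - {l}).\<close>
lemma sum_insert_card:
  fixes f :: "'n::finite set \<Rightarrow> 'a::comm_ring_1"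
  shows "(\<Sum>l\<in>UNIV. \<Sum>S\<in>{S. card S = m}. if l \<in> S then 0 else f (insert l S))
       = of_nat (Suc m) * (\<Sum>T\<in>{T. card T = Suc m}. f T)"
proof -
  have "(\<Sum>S\<in>{S. card S = m}. if l \<in> S then 0 else f (insert l S))
      = (\<Sum>T\<in>{T. card T = Suc m}. if l \<in> T then f T else 0)" for l
  proof -
    have "(\<Sum>S\<in>{S. card S = m}. if l \<in> S then 0 else f (insert l S))
        = (\<Sum>S\<in>{S. card S = m \<and> l \<notin> S}. f (insert l S))"
      by (simp add: sum.If_cases Int_def Collect_conj_eq[symmetric] conj_commute)
    also have "\<dots> = (\<Sum>T\<in>{T. card T = Suc m \<and> l \<in> T}. f T)"
      by (rule sum.reindex_bij_witness[where i="\<lambda>T. T - {l}" and j="insert l"]) auto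
    also have "\<dots> = (\<Sum>T\<in>{T. card T = Suc m}. if l \<in> T then f T else 0)"
      by (simp add: sum.If_cases Int_def Collect_conj_eq[symmetric])
    finally show ?thesis .
  qed
  then have "(\<Sum>l\<in>UNIV. \<Sum>S\<in>{S. card S = m}. if l \<in> S then 0 else f (insert l S))
      = (\<Sum>T\<in>{T. card T = Suc m}. \<Sum>l\<in>UNIV. if l \<in> T then f T else 0)"
    by (simp add: sum.swap[of _ UNIV])
  also have "\<dots> = (\<Sum>T\<in>{T. card T = Suc m}. of_nat (Suc m) * f T)"
    by (rule sum.cong[OF refl]) (simp add: sum.If_cases Int_absorb1)
  finally show ?thesis by (simp add: sum_distrib_left)
qed

section \<open>Deforming the potential along \<psi>\<close>

locale potential_deformation =
  fixes S :: "(real^'n::finite) set" and g psi :: "real^'n \<Rightarrow> real" and s :: real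
  assumes g_diff3: "differentiable3_on S g" and psi_diff3: "differentiable3_on S psi"
begin

abbreviation X :: "'n pt \<Rightarrow> 'n ctv" where "X \<equiv> ham_vf (lift psi)"

abbreviation gs :: "real^'n \<Rightarrow> real" where "gs \<equiv> \<lambda>x. g x + s * psi x"

lemma open_S: "open S"
  using g_diff3 by (simp add: differentiable3_on_def)

lemma g_differentiable:
  "x \<in> S \<Longrightarrow> g differentiable (at x)" "x \<in> S \<Longrightarrow> pd g i differentiable (at x)"
  "x \<in> S \<Longrightarrow> pd (pd g i) j differentiable (at x)"
  using g_diff3 by (auto simp: differentiable3_on_def)

lemma psi_differentiable:
  "x \<in> S \<Longrightarrow> psi differentiable (at x)" "x \<in> S \<Longrightarrow> pd psi i differentiable (at x)"
  "x \<in> S \<Longrightarrow> pd (pd psi i) j differentiable (at x)"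
  using psi_diff3 by (auto simp: differentiable3_on_def)

lemma gs_diff3: "differentiable3_on S gs"
  using differentiable3_on_add[OF g_diff3 differentiable3_on_cmult[OF psi_diff3]] .

lemma gs_differentiable: "x \<in> S \<Longrightarrow> pd gs i differentiable (at x)"
  using gs_diff3 by (simp add: differentiable3_on_def)

lemma pd2_gs:
  assumes x: "x \<in> S"
  shows "pd2 gs x k i = pd2 g x k i + s * pd2 psi x k i"
proof -
  have pd_sum: "pd (\<lambda>y. f y + s * h y) m y = pd f m y + s * pd h m y"
    if "f differentiable (at y)" "h differentiable (at y)" for f h :: "real^'n \<Rightarrow> real" and m y
    using pd_add[OF that(1) differentiable_mult[OF differentiable_const that(2)]] pd_cmult[OF that(2)]
    by simp
  have "pd (pd gs k) i x = pd (\<lambda>y. pd g k y + s * pd psi k y) i x"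
    using pd_sum g_differentiable(1) psi_differentiable(1) by (intro pd_cong_open[OF open_S x]) auto
  also have "\<dots> = pd (pd g k) i x + s * pd (pd psi k) i x"
    using pd_sum g_differentiable(2)[OF x] psi_differentiable(2)[OF x] by simp
  finally show ?thesis by (simp add: pd2_def)
qed

lemma ham_vf_psi:
  assumes "fst q \<in> S"
  shows "X q = (0, \<chi> i. - complex_of_real (pd psi i (fst q)))"
proof -
  have "lift psi = (\<lambda>q. complex_of_real (psi (fst q)))" by (rule ext) (simp add: lift_def)
  then have "X q = ((\<chi> i. 0), (\<chi> i. - complex_of_real (pd psi i (fst q))))"
    using cdiff_fst_comp[OF psi_differentiable(1)[OF assms]] by (intro ham_vf_eqI) simp
  then show ?thesis by (simp add: vec_eq_iff prod_eq_iff)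
qed

lemma ham_vf_zc:
  assumes "fst q \<in> S"
  shows "ham_vf (zc g j) q
           = ((\<chi> i. if i = j then \<i> else 0), \<chi> i. - complex_of_real (pd2 g (fst q) j i))"
proof (rule ham_vf_eqI)
  fix W :: "'n ctv"
  have "(\<Sum>i\<in>UNIV. snd W $ i * (if i = j then \<i> else 0)) = \<i> * snd W $ j"
    by (simp add: if_distrib[of "\<lambda>x. snd W $ _ * x"] cong: if_cong)
  then show "cdiff (zc g j) q W = (\<Sum>i\<in>UNIV. fst W $ i * complex_of_real (pd2 g (fst q) j i)
       + snd W $ i * (if i = j then \<i> else 0))"
    using cdiff_zc[OF g_differentiable(2)[OF assms]] by (simp add: sum.distrib)
qed

lemma cdiffV_ham_vf_psi:
  assumes "fst p \<in> S"
  shows "cdiffV X p w = (0, \<chi> i. - (\<Sum>k\<in>UNIV. fst w $ k * complex_of_real (pd2 psi (fst p) i k)))"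
  using cdiffV_vertical[OF open_S assms, of X 0 "-1" "pd psi"] ham_vf_psi psi_differentiable(2)[OF assms]
  by (simp add: pd2_def)

definition lie_iter :: "'n \<Rightarrow> nat \<Rightarrow> 'n pt \<Rightarrow> 'n ctv" where
  "lie_iter j k = ((lie X) ^^ k) (ham_vf (zc g j))"

lemma lie_iter_0: "lie_iter j 0 = ham_vf (zc g j)"
  by (simp add: lie_iter_def)

lemma lie_iter_Suc: "lie_iter j (Suc k) p = cdiffV (lie_iter j k) p (X p) - cdiffV X p (lie_iter j k p)"
  by (simp add: lie_iter_def lie_def)

lemma lie_iter_Suc_0:
  assumes "fst p \<in> S"
  shows "lie_iter j (Suc 0) p = (0, \<chi> i. \<i> * complex_of_real (pd2 psi (fst p) i j))"
proof -
  have "cdiffV (lie_iter j 0) p w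
          = (0, \<chi> i. - (\<Sum>k\<in>UNIV. fst w $ k * complex_of_real (pd (pd (pd g j) i) k (fst p))))" for w
    using cdiffV_vertical[OF open_S assms, of "lie_iter j 0" _ "-1" "\<lambda>i. pd (pd g j) i"]
      ham_vf_zc g_differentiable(3)[OF assms] by (simp add: lie_iter_0 pd2_def)
  then show ?thesis
    using assms by (simp add: lie_iter_Suc[where k=0] lie_iter_0 cdiffV_ham_vf_psi
        ham_vf_psi ham_vf_zc vec_eq_iff prod_eq_iff if_distrib[of "\<lambda>x. x * _"] cong: if_cong)
qed

lemma lie_iter_Suc_Suc:
  assumes "fst p \<in> S"
  shows "lie_iter j (Suc (Suc k)) p = 0"
  using assms
proof (induction k arbitrary: p)
  case 0
  have "cdiffV (lie_iter j (Suc 0)) p w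
          = (0, \<chi> i. \<i> * (\<Sum>k\<in>UNIV. fst w $ k * complex_of_real (pd (pd (pd psi i) j) k (fst p))))" for w
    using cdiffV_vertical[OF open_S 0, of "lie_iter j (Suc 0)" 0 \<i> "\<lambda>i. pd (pd psi i) j"]
      lie_iter_Suc_0 psi_differentiable(3)[OF 0] by (simp add: pd2_def)
  then show ?case
    using 0 by (simp add: lie_iter_Suc[of j "Suc 0"] cdiffV_ham_vf_psi ham_vf_psi lie_iter_Suc_0
        vec_eq_iff prod_eq_iff)
next
  case (Suc k)
  have "cdiffV (lie_iter j (Suc (Suc k))) p w = (0, \<chi> i. 0 * (\<Sum>m\<in>UNIV. fst w $ m * 0))" for w
    using cdiffV_vertical[OF open_S Suc.prems, of _ 0 0 "\<lambda>i x. 0"] Suc.IH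
    by (simp add: zero_prod_def vec_eq_iff pd_def)
  then show ?case
    using Suc by (simp add: lie_iter_Suc[of j "Suc (Suc k)"] cdiffV_ham_vf_psi vec_eq_iff prod_eq_iff)
qed

lemma sums_exp_lie_ham_vf_zc:
  assumes p: "fst p \<in> S"
  shows "(\<lambda>k. cscale ((\<i> * complex_of_real s) ^ k / fact k) (lie_iter j k p)) sums
         ((\<chi> i. if i = j then \<i> else 0), \<chi> i. - complex_of_real (pd2 gs (fst p) j i))"
proof -
  let ?f = "\<lambda>k. cscale ((\<i> * complex_of_real s) ^ k / fact k) (lie_iter j k p)"
  have "?f sums (\<Sum>k\<in>{0, Suc 0}. ?f k)"
  proof (rule sums_finite)
    fix n :: nat assume "n \<notin> {0, Suc 0}"
    then obtain m where "n = Suc (Suc m)" by (metis insertCI not0_implies_Suc)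
    then show "?f n = 0" using lie_iter_Suc_Suc[OF p] by (simp add: cscale_def zero_prod_def)
  qed simp
  also have "(\<Sum>k\<in>{0, Suc 0}. ?f k) = lie_iter j 0 p + cscale (\<i> * complex_of_real s) (lie_iter j (Suc 0) p)"
    by (simp add: cscale_def)
  also have "\<dots> = ((\<chi> i. if i = j then \<i> else 0), \<chi> i. - complex_of_real (pd2 gs (fst p) j i))"
    using p by (simp add: lie_iter_0 ham_vf_zc lie_iter_Suc_0 cscale_def vec_eq_iff pd2_gs
        pd2_commute[OF psi_diff3 p, of _ j] algebra_simps)
  finally show ?thesis .
qed

lemma summable_exp_lie_ham_vf_zc:
  assumes "fst p \<in> S"
  shows "summable (\<lambda>k. cscale ((\<i> * complex_of_real s) ^ k / fact k)
                          (((lie X) ^^ k) (ham_vf (zc g j)) p))"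
  using sums_summable[OF sums_exp_lie_ham_vf_zc[OF assms]] by (simp add: lie_iter_def)

lemma nondegenerate_symmetric_pd2_gs:
  assumes x: "x \<in> S" and pos: "\<And>v. v \<noteq> 0 \<Longrightarrow> 0 < v \<bullet> (hess gs x *v v)"
  shows "nondegenerate_symmetric (pd2 gs x)"
proof
  show "pd2 gs x k i = pd2 gs x i k" for k i
    using pd2_commute[OF gs_diff3 x] .
  fix a :: "real^'n" assume "\<And>k. (\<Sum>i\<in>UNIV. pd2 gs x k i * a $ i) = 0"
  then have "hess gs x *v a = 0"
    using pd2_commute[OF gs_diff3 x]
    by (simp add: hess_def matrix_vector_mult_def vec_eq_iff pd2_def)
  then show "a = 0" using pos by force
qed

lemma cspan_exp_lie_ham_vf_zc:
  assumes p: "fst p \<in> S" and pos: "\<And>v. v \<noteq> 0 \<Longrightarrow> 0 < v \<bullet> (hess gs (fst p) *v v)"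
  shows "cspan_fam (\<lambda>j. \<Sum>k. cscale ((\<i> * complex_of_real s) ^ k / fact k)
                               (((lie X) ^^ k) (ham_vf (zc g j)) p))
        = polarization gs p"
proof -
  let ?M = "pd2 gs (fst p)"
  interpret M: nondegenerate_symmetric ?M
    by (rule nondegenerate_symmetric_pd2_gs[OF p pos])
  have dz: "cdiff (zc gs k) p w = dz_lin ?M w k" "cdiff (\<lambda>q. cnj (zc gs k q)) p w = dzbar_lin ?M w k"
    for k w
    using cdiff_zc[OF gs_differentiable[OF p]] cdiff_cnj_zc[OF gs_differentiable[OF p]]
    by (simp_all add: dz_lin_def dzbar_lin_def)
  have "dz_lin ?M (dzbar gs j p) k = 0 \<and> dzbar_lin ?M (dzbar gs j p) k = (if k = j then 1 else 0)"
    for j k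
    using theI'[OF M.ex1_dual_basis[of j]] by (simp add: dzbar_def dz)
  then have "polarization gs p = tangent01 ?M"
    unfolding polarization_def by (rule M.cspan_dual_basis)
  then show ?thesis
    using sums_unique[OF sums_exp_lie_ham_vf_zc[OF p], symmetric] M.cspan_ham_vf_zc
    by (simp add: lie_iter_def)
qed

text \<open>dpsi_col x v l k is d(d_k psi)(v_l); replaced_det x v T t is the determinant of
  (dz_k(v_l))_(k,l) with each column l in T replaced by t d(d_k psi)(v_l).\<close>
definition dpsi_col :: "real^'n \<Rightarrow> ('n \<Rightarrow> 'n ctv) \<Rightarrow> 'n \<Rightarrow> 'n \<Rightarrow> complex" where
  "dpsi_col x v l k = (\<Sum>i\<in>UNIV. fst (v l) $ i * complex_of_real (pd2 psi x k i))"

definition replaced_det :: "real^'n \<Rightarrow> ('n \<Rightarrow> 'n ctv) \<Rightarrow> 'n set \<Rightarrow> complex \<Rightarrow> complex" where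
  "replaced_det x v T t = det (\<chi> k l. if l \<in> T then t * dpsi_col x v l k else dz_lin (pd2 g x) (v l) k)"

lemma differentiable_replaced_det:
  assumes x: "x \<in> S"
  shows "(\<lambda>y. replaced_det y v T t) differentiable (at x)"
proof -
  have "(\<lambda>y. dpsi_col y v l k) differentiable (at x)" "(\<lambda>y. dz_lin (pd2 g y) (v l) k) differentiable (at x)"
    for l k
    unfolding dpsi_col_def dz_lin_def pd2_def
    by (intro differentiable_add differentiable_sum ballI differentiable_mult differentiable_const
        differentiable_of_real_comp psi_differentiable(3)[OF x] g_differentiable(3)[OF x]; simp)+
  then have "(\<lambda>y. if l \<in> T then t * dpsi_col y v l k else dz_lin (pd2 g y) (v l) k)
               differentiable (at x)" for l k
    by (cases "l \<in> T") (auto intro: differentiable_mult differentiable_const)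
  then show ?thesis unfolding replaced_det_def by (rule differentiable_det)
qed

lemma replaced_det_lie_update:
  assumes q: "fst q \<in> S"
  shows "replaced_det (fst q) (v(l := cdiffV X q (v l))) T (- \<i>)
           = (if l \<in> T then 0 else replaced_det (fst q) v (insert l T) (- \<i>))"
proof -
  let ?x = "fst q" and ?u = "cdiffV X q (v l)"
  have "fst ?u = 0" by (simp add: cdiffV_ham_vf_psi[OF q])
  then have col_zero: "dpsi_col ?x (v(l := ?u)) l k = 0" for k by (simp add: dpsi_col_def)
  have dz_u: "dz_lin (pd2 g ?x) ?u k = - \<i> * dpsi_col ?x v l k" for k
    by (simp add: cdiffV_ham_vf_psi[OF q] dz_lin_def dpsi_col_def)
  show ?thesis
  proof (cases "l \<in> T")
    case True
    have "column l (\<chi> k l'. if l' \<in> T then - \<i> * dpsi_col ?x (v(l := ?u)) l' k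
                           else dz_lin (pd2 g ?x) ((v(l := ?u)) l') k) = 0"
      using True by (simp add: column_def vec_eq_iff col_zero)
    then show ?thesis using True by (simp add: replaced_det_def det_zero_column)
  next
    case False
    have "(\<chi> k l'. if l' \<in> T then - \<i> * dpsi_col ?x (v(l := ?u)) l' k
                  else dz_lin (pd2 g ?x) ((v(l := ?u)) l') k)
        = (\<chi> k l'. if l' \<in> insert l T then - \<i> * dpsi_col ?x v l' k else dz_lin (pd2 g ?x) (v l') k)"
      using False by (auto simp: vec_eq_iff dz_u dpsi_col_def)
    then show ?thesis using False by (simp add: replaced_det_def)
  qed
qed

lemma lieF_iter_dZ:
  "fst q \<in> S \<Longrightarrow> ((lieF X) ^^ m) (dZ g) q v
     = fact m * (\<Sum>T\<in>{T. card T = m}. replaced_det (fst q) v T (- \<i>))"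
proof (induction m arbitrary: q v)
  case 0
  have "{T::'n set. card T = 0} = {{}}" by auto
  then show ?case
    using 0 by (simp add: replaced_det_def dZ_def cdiff_zc[OF g_differentiable(2)[OF 0]] dz_lin_def)
next
  case (Suc m)
  let ?x = "fst q" and ?F = "((lieF X) ^^ m) (dZ g)"
  let ?G = "\<lambda>y. fact m * (\<Sum>T\<in>{T. card T = m}. replaced_det y v T (- \<i>))"
  have "frechet_derivative (\<lambda>q'. ?F q' v) (at q) = frechet_derivative (\<lambda>q'. ?G (fst q')) (at q)"
    using Suc.IH by (intro frechet_derivative_cong_open[of "S \<times> UNIV"])
      (use open_S Suc.prems in \<open>auto simp: open_Times mem_Times_iff\<close>)
  moreover have "cdiff (\<lambda>q'. ?G (fst q')) q (X q) = 0"
    using Suc.prems differentiable_replaced_det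
    by (intro cdiff_fst_comp_vertical) (auto simp: ham_vf_psi intro!: differentiable_mult differentiable_sum)
  ultimately have "cdiff (\<lambda>q'. ?F q' v) q (X q) = 0" by (simp add: cdiff_def)
  then have "((lieF X) ^^ Suc m) (dZ g) q v = (\<Sum>l\<in>UNIV. ?F q (v(l := cdiffV X q (v l))))"
    by (simp add: lieF_def)
  also have "\<dots> = fact m * (\<Sum>l\<in>UNIV. \<Sum>T\<in>{T. card T = m}.
                        if l \<in> T then 0 else replaced_det ?x v (insert l T) (- \<i>))"
    using Suc.IH[OF Suc.prems] replaced_det_lie_update[OF Suc.prems]
    by (simp add: sum_distrib_left)
  also have "\<dots> = fact (Suc m) * (\<Sum>T\<in>{T. card T = Suc m}. replaced_det ?x v T (- \<i>))"
    by (simp only: sum_insert_card[where f="\<lambda>T. replaced_det ?x v T (- \<i>)"]) (simp add: algebra_simps)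
  finally show ?case .
qed

lemma replaced_det_scale: "replaced_det x v T (c * t) = c ^ card T * replaced_det x v T t"
proof -
  have "replaced_det x v T (c * t)
    = det (\<chi> k l. if l \<in> T then c * (if l \<in> T then t * dpsi_col x v l k else dz_lin (pd2 g x) (v l) k)
                   else (if l \<in> T then t * dpsi_col x v l k else dz_lin (pd2 g x) (v l) k))"
    unfolding replaced_det_def by (rule arg_cong[where f=det]) (simp add: vec_eq_iff)
  then show ?thesis unfolding replaced_det_def by (simp only: det_scale_columns)
qed

lemma sums_exp_lieF_dZ:
  assumes q: "fst q \<in> S"
  shows "(\<lambda>k. (\<i> * complex_of_real s) ^ k / fact k * ((lieF X) ^^ k) (dZ g) q v) sums dZ gs q v"
proof -
  let ?x = "fst q"
  let ?f = "\<lambda>k. (\<i> * complex_of_real s) ^ k / fact k * ((lieF X) ^^ k) (dZ g) q v"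
  have summand: "?f k = (\<Sum>T\<in>{T. card T = k}. replaced_det ?x v T (complex_of_real s))" for k
  proof -
    have "?f k = (\<Sum>T\<in>{T. card T = k}. (\<i> * complex_of_real s) ^ card T * replaced_det ?x v T (- \<i>))"
      by (simp add: lieF_iter_dZ[OF q] sum_distrib_left)
    also have "\<dots> = (\<Sum>T\<in>{T. card T = k}. replaced_det ?x v T ((\<i> * complex_of_real s) * (- \<i>)))"
      by (simp only: replaced_det_scale)
    finally show ?thesis by (simp add: algebra_simps)
  qed
  have card_le: "card (T::'n set) \<le> CARD('n)" for T by (rule card_mono) auto
  have "?f sums (\<Sum>k\<in>{..CARD('n)}. ?f k)"
  proof (rule sums_finite)
    fix k assume "k \<notin> {..CARD('n)}"
    then have "{T::'n set. card T = k} = {}" using card_le by (force simp: not_le)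
    then show "?f k = 0" by (simp only: summand sum.empty)
  qed simp
  also have "(\<Sum>k\<in>{..CARD('n)}. ?f k)
      = (\<Sum>k\<in>{..CARD('n)}. \<Sum>T\<in>{T\<in>UNIV. card T = k}. replaced_det ?x v T (complex_of_real s))"
    by (simp only: summand UNIV_I simp_thms)
  also have "\<dots> = (\<Sum>T\<in>UNIV. replaced_det ?x v T (complex_of_real s))"
    by (rule sum.group) (auto simp: card_le)
  also have "\<dots> = det (\<chi> k l. dz_lin (pd2 g ?x) (v l) k + complex_of_real s * dpsi_col ?x v l k)"
    unfolding replaced_det_def by (rule det_add_columns[symmetric])
  also have "\<dots> = dZ gs q v"
    using cdiff_zc[OF gs_differentiable[OF q]]
    by (simp add: dZ_def dz_lin_def dpsi_col_def pd2_gs[OF q] sum_distrib_left sum.distrib algebra_simps)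
  finally show ?thesis .
qed

end

theorem mainTheorem1:
  fixes nu :: "'r::finite \<Rightarrow> int^'n::finite" and lam :: "'r \<Rightarrow> real"
    and g psi :: "real^'n \<Rightarrow> real" and s :: real
  assumes "delzant nu lam"
    and "sympl_potential nu lam g"
    and "smooth_upto (polytope nu lam) psi"
    and "strongly_convex_on (polytope nu lam) psi"
    and "\<forall>t>0. sympl_potential nu lam (\<lambda>x. g x + t * psi x)"
    and "s > 0"
  shows "(\<forall>p\<in>chart nu lam. \<forall>j.
            summable (\<lambda>k. cscale ((\<i> * complex_of_real s) ^ k / fact k)
                              (((lie (ham_vf (lift psi))) ^^ k) (ham_vf (zc g j)) p)))
       \<and> (\<forall>p\<in>chart nu lam.
            cspan_fam (\<lambda>j. \<Sum>k. cscale ((\<i> * complex_of_real s) ^ k / fact k)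
                              (((lie (ham_vf (lift psi))) ^^ k) (ham_vf (zc g j)) p))
            = polarization (\<lambda>x. g x + s * psi x) p)
       \<and> (\<forall>p\<in>chart nu lam. \<forall>v.
            (\<lambda>k. (\<i> * complex_of_real s) ^ k / fact k *
                  ((lieF (ham_vf (lift psi))) ^^ k) (dZ g) p v)
            sums dZ (\<lambda>x. g x + s * psi x) p v)"
proof -
  let ?S = "interior (polytope nu lam)"
  interpret potential_deformation ?S g psi s
    using differentiable3_on_sympl_potential[OF assms(1,2)]
      smooth_upto_imp_differentiable3_on_interior[OF assms(3)] by unfold_locales
  have pos: "\<And>x v. x \<in> ?S \<Longrightarrow> v \<noteq> 0 \<Longrightarrow> 0 < v \<bullet> (hess (\<lambda>x. g x + s * psi x) x *v v)"
    using assms(5,6) unfolding sympl_potential_def by blast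
  have "fst p \<in> ?S" if "p \<in> chart nu lam" for p
    using that by (auto simp: chart_def)
  then show ?thesis
    using summable_exp_lie_ham_vf_zc cspan_exp_lie_ham_vf_zc pos sums_exp_lieF_dZ by blast
qed

end
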